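(* Let $F$ be a Ferrers diagram of semiperimeter $n+1$, $T\in\mathsf{EWtab}(F)$ and $S=S(T)$ its supplementary tableau, with $\mathsf{CanonTop}(T)=(U^{(0)}_T,V^{(1)}_T,U^{(1)}_T,V^{(2)}_T,\ldots)$. (a) If $j\in U^{(\ell)}_T$ and $k\in\mathsf{cols}(F)$ with $j<k$, then $k\in V^{(\ell)}_T$ if and only if $S_{jk}=0$ and this $0$ is not a cornersupport entry. (b) If $j\in V^{(\ell)}_T$ and $k\in\mathsf{rows}(F)$ with $k<j$, then $k\in U^{(\ell-1)}_T$ if and only if $S_{kj}=1$ and this $1$ is not a cornersupport entry.
   Context: Ferrers diagrams and graphs: a Ferrers diagram $F$ (English convention) of semiperimeter $n+1$ has rows and columns labeled by $0,\ldots,n$: the $n+1$ unit steps of its south-east boundary path, traversed from top-right to bottom-left, are labeled $0,\ldots,n$; a vertical step labels the row it bounds, a horizontal step the column it bounds (top row labeled $0$). $\mathsf{rows}(F)$, $\mathsf{cols}(F)$ are the label sets; $F$ has a cell in row $i$, column $j$ iff $i<j$. $G(F)$ has vertex set $\{0,\ldots,n\}$ with edges $\{i,j\}$ for $i\in\mathsf{rows}(F)$, $j\in\mathsf{cols}(F)$, $i<j$. Sandpile model on $G(F)$ with sink $0$: configurations $c\in\mathbb{N}^n$; non-sink $v$ unstable if $c_v\ge\deg(v)$; toppling sends one grain to each neighbour (grains to $0$ disappear); toppling the sink adds one grain to each neighbour of $0$. Recurrent: stable configurations obtainable from $c_v=\deg(v)-1$ by adding grains and stabilizing; $\mathsf{Rec}^{\mathsf{min}}$: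 recurrent configurations of minimal total grain count. Canonical toppling of a recurrent $c$: topple the sink ($U^{(0)}_c=\{0\}$), then alternately topple simultaneously all unstable vertices in $\mathsf{cols}(F)$ ($V^{(1)}_c$), all unstable in $\mathsf{rows}(F)$ ($U^{(1)}_c$), etc.; $\mathsf{CanonTop}(c)=(U^{(0)}_c,V^{(1)}_c,U^{(1)}_c,\ldots)$ is an ordered partition of $\{0,\ldots,n\}$. EW-tableaux: a $0/1$-filling $T$ of $F$ ($T_{ij}$ = entry in row $i$, column $j$) such that the top row is all 1s, every other row contains a 0, and no rectangle has 0s in two diagonally opposite corners and 1s in the other two; $\mathsf{EWtab}(F)$ is their set. $\phi_{TC}(T)$ is the configuration with $c_i$ = number of 1s in row $i$ ($i\in\mathsf{rows}(F)$) and $c_i$ = number of 0s in column $i$ ($i\in\mathsf{cols}(F)$); it is a minimal recurrent configuration. Set $\mathsf{CanonTop}(T):=\mathsf{CanonTop}(\phi_{TC}(T))$, with blocks $U^{(i)}_T,V^{(i)}_T$. Supplementary tableau: $S=S(T)$ is the rectangular $|\mathsf{rows}(F)|\times|\mathsf{cols}(F)|$ array with $S_{ij}=1$ if $i\in\mathsf{rows}(F)$ appears in an earlier block of $\mathsf{CanonTop}(T)$ than $j\in\mathsf{cols}(F)$, and $S_{ij}=0$ otherwise; it agrees with $T$ on the cells of $F$. Cornersupport: an entry $x\in\{0,1\}$ at position $(j,k)$ ($j$ a row, $k$ a column) is a cornersupport entry iff there exist a row $j'\ne j$ and a column $k'\ne k$ with $S_{j'k'}\ne x$ and $S_{j'k}=S_{jk'}=x$;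 one then says $S_{j'k'}$ induces $(j,k)$ to be a cornersupport. *)

theory Defs
  imports Main
begin

text \<open>A Ferrers diagram of semiperimeter n+1 is encoded by its set R of row labels
  (subset of {0..n}); the column labels are the remaining labels. The boundary path
  starts with a vertical step (top row labelled 0) and ends with a horizontal step
  (leftmost column labelled n).\<close>

definition ferrers :: "nat \<Rightarrow> nat set \<Rightarrow> bool" where
  "ferrers n R \<longleftrightarrow> R \<subseteq> {0..n} \<and> 0 \<in> R \<and> n \<notin> R"

definition cols :: "nat \<Rightarrow> nat set \<Rightarrow> nat set" where
  "cols n R = {0..n} - R"

definition is_cell :: "nat \<Rightarrow> nat set \<Rightarrow> nat \<Rightarrow> nat \<Rightarrow> bool" where
  "is_cell n R i j \<longleftrightarrow> i \<in> R \<and> j \<in> cols n R \<and> i < j"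

definition adj :: "nat \<Rightarrow> nat set \<Rightarrow> nat \<Rightarrow> nat \<Rightarrow> bool" where
  "adj n R u v \<longleftrightarrow> is_cell n R u v \<or> is_cell n R v u"

definition deg :: "nat \<Rightarrow> nat set \<Rightarrow> nat \<Rightarrow> nat" where
  "deg n R v = card {w \<in> {0..n}. adj n R w v}"

text \<open>Configurations are functions nat => nat; only the values at 1..n matter.\<close>

definition sink_topple :: "nat \<Rightarrow> nat set \<Rightarrow> (nat \<Rightarrow> nat) \<Rightarrow> (nat \<Rightarrow> nat)" where
  "sink_topple n R c = (\<lambda>v. c v + (if adj n R 0 v then 1 else 0))"

definition topple_set :: "nat \<Rightarrow> nat set \<Rightarrow> nat set \<Rightarrow> (nat \<Rightarrow> nat) \<Rightarrow> (nat \<Rightarrow> nat)" where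
  "topple_set n R A c = (\<lambda>v. c v - (if v \<in> A then deg n R v else 0) + card {w \<in> A. adj n R w v})"

primrec canon_step :: "nat \<Rightarrow> nat set \<Rightarrow> (nat \<Rightarrow> nat) \<Rightarrow> nat \<Rightarrow> (nat \<Rightarrow> nat) \<times> nat set" where
  "canon_step n R c 0 = (sink_topple n R c, {0})"
| "canon_step n R c (Suc k) =
     (let d = fst (canon_step n R c k);
          A = {v \<in> (if even k then cols n R else R - {0}). deg n R v \<le> d v}
      in (topple_set n R A d, A))"

text \<open>CanonTop(c) = (U^(0), V^(1), U^(1), V^(2), ...).\<close>
definition canon_U :: "nat \<Rightarrow> nat set \<Rightarrow> (nat \<Rightarrow> nat) \<Rightarrow> nat \<Rightarrow> nat set" where
  "canon_U n R c l = snd (canon_step n R c (2 * l))"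

definition canon_V :: "nat \<Rightarrow> nat set \<Rightarrow> (nat \<Rightarrow> nat) \<Rightarrow> nat \<Rightarrow> nat set" where
  "canon_V n R c l = (if l = 0 then {} else snd (canon_step n R c (2 * l - 1)))"

definition block_index :: "nat \<Rightarrow> nat set \<Rightarrow> (nat \<Rightarrow> nat) \<Rightarrow> nat \<Rightarrow> nat" where
  "block_index n R c v = (LEAST k. v \<in> snd (canon_step n R c k))"

definition EWtab :: "nat \<Rightarrow> nat set \<Rightarrow> (nat \<Rightarrow> nat \<Rightarrow> nat) set" where
  "EWtab n R = {T.
     (\<forall>i j. is_cell n R i j \<longrightarrow> T i j \<in> {0, 1}) \<and>
     (\<forall>j \<in> cols n R. T 0 j = 1) \<and>
     (\<forall>i \<in> R - {0}. \<exists>j. is_cell n R i j \<and> T i j = 0) \<and>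
     (\<forall>i1 i2 j1 j2. is_cell n R i1 j1 \<and> is_cell n R i1 j2 \<and> is_cell n R i2 j1 \<and>
        is_cell n R i2 j2 \<and> i1 \<noteq> i2 \<and> j1 \<noteq> j2 \<longrightarrow>
        \<not> (T i1 j1 = 0 \<and> T i2 j2 = 0 \<and> T i1 j2 = 1 \<and> T i2 j1 = 1))}"

definition phi_TC :: "nat \<Rightarrow> nat set \<Rightarrow> (nat \<Rightarrow> nat \<Rightarrow> nat) \<Rightarrow> (nat \<Rightarrow> nat)" where
  "phi_TC n R T = (\<lambda>v.
     if v \<in> R then card {j. is_cell n R v j \<and> T v j = 1}
     else if v \<in> cols n R then card {i. is_cell n R i v \<and> T i v = 0}
     else 0)"

definition suppl :: "nat \<Rightarrow> nat set \<Rightarrow> (nat \<Rightarrow> nat \<Rightarrow> nat) \<Rightarrow> nat \<Rightarrow> nat \<Rightarrow> nat" where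
  "suppl n R T i j =
     (if block_index n R (phi_TC n R T) i < block_index n R (phi_TC n R T) j then 1 else 0)"

definition cornersupport :: "nat \<Rightarrow> nat set \<Rightarrow> (nat \<Rightarrow> nat \<Rightarrow> nat) \<Rightarrow> nat \<Rightarrow> nat \<Rightarrow> bool" where
  "cornersupport n R S j k \<longleftrightarrow>
     (\<exists>j' \<in> R. j' \<noteq> j \<and> (\<exists>k' \<in> cols n R. k' \<noteq> k \<and>
        S j' k' \<noteq> S j k \<and> S j' k = S j k \<and> S j k' = S j k))"

end

(* The rank of a vertex is the index of the block of CanonTop in which it topples.
   Because phi_TC(T) is stable, each vertex topples at most once, the blocks alternate
   between columns and rows, and no empty block precedes a nonempty one. The tableau
   orients every edge of G(F) (a 1 in cell (i,j) as i -> j, a 0 as j -> i) so that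
   phi_TC(T) counts out-arcs; avoiding the forbidden rectangle pattern makes every
   nonempty set of non-sink vertices contain a source, which is Dhar's burning criterion,
   so every vertex topples. Then S_jk = [rank j < rank k], and the entry at (j,k) is a
   cornersupport exactly when some row and some column have ranks strictly between
   those of j and k, i.e. when the ranks differ by at least 3. Ranks of rows are even
   and ranks of columns odd, so an entry is not a cornersupport iff the ranks of j and k
   are consecutive, which is what (a) and (b) assert. *)

theory Submission
  imports Defs
begin

lemma adj_bounded: "adj n R u v \<Longrightarrow> u \<le> n \<and> v \<le> n"
  by (auto simp: adj_def is_cell_def cols_def)

lemma adj_sym: "adj n R u v \<longleftrightarrow> adj n R v u"
  by (auto simp: adj_def)

lemma adj_row_iff: "adj n R u v \<Longrightarrow> u \<in> R \<longleftrightarrow> v \<notin> R"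
  by (auto simp: adj_def is_cell_def cols_def)

lemma deg_eq_card_adj: "deg n R v = card {w. adj n R w v}"
  unfolding deg_def by (metis (no_types, lifting) adj_bounded atLeastAtMost_iff le0)

lemma finite_adj: "finite {w. adj n R w v}"
  by (rule finite_subset[of _ "{0..n}"]) (auto dest: adj_bounded)

lemma card_adj_le_deg: "card {w \<in> A. adj n R w v} \<le> deg n R v"
  unfolding deg_eq_card_adj by (rule card_mono[OF finite_adj]) blast

section \<open>Supplementary tableaux of a layering\<close>

definition rank_tableau :: "(nat \<Rightarrow> nat) \<Rightarrow> nat \<Rightarrow> nat \<Rightarrow> nat" where
  "rank_tableau \<rho> i j = (if \<rho> i < \<rho> j then 1 else 0)"

lemma suppl_eq_rank_tableau: "suppl n R T = rank_tableau (block_index n R (phi_TC n R T))"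
  by (intro ext) (simp add: suppl_def rank_tableau_def)

locale layering =
  fixes n :: nat and R :: "nat set" and \<rho> :: "nat \<Rightarrow> nat"
  assumes rows_subset: "R \<subseteq> {0..n}"
    and even_rank_iff_row: "v \<le> n \<Longrightarrow> even (\<rho> v) \<longleftrightarrow> v \<in> R"
    and rank_attained_below: "v \<le> n \<Longrightarrow> i \<le> \<rho> v \<Longrightarrow> \<exists>w \<le> n. \<rho> w = i"
begin

lemma even_rank_row: "v \<in> R \<Longrightarrow> even (\<rho> v)"
  using rows_subset even_rank_iff_row by auto

lemma odd_rank_col: "v \<in> cols n R \<Longrightarrow> odd (\<rho> v)"
  using even_rank_iff_row by (auto simp: cols_def)

lemma row_of_rank:
  assumes "v \<le> n" "i \<le> \<rho> v" "even i"
  obtains w where "w \<in> R" "\<rho> w = i"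
  using rank_attained_below[OF assms(1,2)] even_rank_iff_row assms(3) by blast

lemma col_of_rank:
  assumes "v \<le> n" "i \<le> \<rho> v" "odd i"
  obtains w where "w \<in> cols n R" "\<rho> w = i"
  using rank_attained_below[OF assms(1,2)] even_rank_iff_row assms(3)
  by (auto simp: cols_def)

lemma rank_row_col_distance:
  assumes "j \<in> R" "k \<in> cols n R"
  shows "\<rho> j \<noteq> \<rho> k" "\<rho> j \<noteq> \<rho> k + 2" "\<rho> k \<noteq> \<rho> j + 2"
  using even_rank_row[OF assms(1)] odd_rank_col[OF assms(2)] by auto

lemma cornersupport_rank_tableau_iff:
  assumes j: "j \<in> R" and k: "k \<in> cols n R"
  shows "cornersupport n R (rank_tableau \<rho>) j k \<longleftrightarrow> \<rho> k + 3 \<le> \<rho> j \<or> \<rho> j + 3 \<le> \<rho> k"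
proof
  assume "cornersupport n R (rank_tableau \<rho>) j k"
  then obtain j' k' where j': "j' \<in> R" and k': "k' \<in> cols n R"
    and S: "rank_tableau \<rho> j' k' \<noteq> rank_tableau \<rho> j k"
      "rank_tableau \<rho> j' k = rank_tableau \<rho> j k" "rank_tableau \<rho> j k' = rank_tableau \<rho> j k"
    unfolding cornersupport_def by blast
  have "\<rho> j \<noteq> \<rho> k" "\<rho> j' \<noteq> \<rho> k" "\<rho> j \<noteq> \<rho> k'" "\<rho> j' \<noteq> \<rho> k'"
    using rank_row_col_distance(1) j k j' k' by blast+
  then have "\<rho> k < \<rho> j' \<and> \<rho> j' < \<rho> k' \<and> \<rho> k' < \<rho> j \<or> \<rho> j < \<rho> k' \<and> \<rho> k' < \<rho> j' \<and> \<rho> j' < \<rho> k"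
    using S unfolding rank_tableau_def by (smt (verit) linorder_neqE_nat)
  then show "\<rho> k + 3 \<le> \<rho> j \<or> \<rho> j + 3 \<le> \<rho> k" by linarith
next
  have jn: "j \<le> n" and kn: "k \<le> n" using j k rows_subset by (auto simp: cols_def)
  assume "\<rho> k + 3 \<le> \<rho> j \<or> \<rho> j + 3 \<le> \<rho> k"
  then show "cornersupport n R (rank_tableau \<rho>) j k"
  proof
    assume gap: "\<rho> k + 3 \<le> \<rho> j"
    obtain j' where "j' \<in> R" "\<rho> j' = \<rho> k + 1"
      using row_of_rank[OF jn, of "\<rho> k + 1"] gap odd_rank_col[OF k] by auto
    moreover obtain k' where "k' \<in> cols n R" "\<rho> k' = \<rho> k + 2"
      using col_of_rank[OF jn, of "\<rho> k + 2"] gap odd_rank_col[OF k] by auto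
    ultimately show ?thesis
      using gap unfolding cornersupport_def rank_tableau_def
      by (intro bexI[of _ j'] bexI[of _ k'] conjI) auto
  next
    assume gap: "\<rho> j + 3 \<le> \<rho> k"
    obtain j' where "j' \<in> R" "\<rho> j' = \<rho> j + 2"
      using row_of_rank[OF kn, of "\<rho> j + 2"] gap even_rank_row[OF j] by auto
    moreover obtain k' where "k' \<in> cols n R" "\<rho> k' = \<rho> j + 1"
      using col_of_rank[OF kn, of "\<rho> j + 1"] gap even_rank_row[OF j] by auto
    ultimately show ?thesis
      using gap unfolding cornersupport_def rank_tableau_def
      by (intro bexI[of _ j'] bexI[of _ k'] conjI) auto
  qed
qed

lemma rank_tableau_0_not_cornersupport_iff:
  assumes "j \<in> R" "k \<in> cols n R"
  shows "rank_tableau \<rho> j k = 0 \<and> \<not> cornersupport n R (rank_tableau \<rho>) j k \<longleftrightarrow> \<rho> j = \<rho> k + 1"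
  using cornersupport_rank_tableau_iff[OF assms] rank_row_col_distance[OF assms]
  by (auto simp: rank_tableau_def)

lemma rank_tableau_1_not_cornersupport_iff:
  assumes "j \<in> R" "k \<in> cols n R"
  shows "rank_tableau \<rho> j k = 1 \<and> \<not> cornersupport n R (rank_tableau \<rho>) j k \<longleftrightarrow> \<rho> k = \<rho> j + 1"
  using cornersupport_rank_tableau_iff[OF assms] rank_row_col_distance[OF assms]
  by (auto simp: rank_tableau_def)

end

section \<open>Canonical toppling of a stable configuration\<close>

locale canonical_toppling =
  fixes n :: nat and R :: "nat set" and c :: "nat \<Rightarrow> nat"
  assumes ferrers: "ferrers n R"
    and stable: "\<And>v. 0 < v \<Longrightarrow> v \<le> n \<Longrightarrow> c v < deg n R v"
begin

definition block :: "nat \<Rightarrow> nat set" where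
  "block k = snd (canon_step n R c k)"

definition config :: "nat \<Rightarrow> nat \<Rightarrow> nat" where
  "config k = fst (canon_step n R c k)"

definition toppled :: "nat \<Rightarrow> nat set" where
  "toppled t = (\<Union>k\<le>t. block k)"

definition phase :: "nat \<Rightarrow> nat set" where
  "phase t = (if even t then cols n R else R - {0})"

lemma block_0: "block 0 = {0}"
  by (simp add: block_def)

lemma config_0: "config 0 = sink_topple n R c"
  by (simp add: config_def)

lemma block_Suc: "block (Suc t) = {v \<in> phase t. deg n R v \<le> config t v}"
  by (simp add: block_def config_def phase_def Let_def)

lemma config_Suc: "config (Suc t) = topple_set n R (block (Suc t)) (config t)"
  by (simp add: block_def config_def phase_def Let_def)

lemma toppled_0: "toppled 0 = {0}"
  by (simp add: toppled_def block_0)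

lemma toppled_Suc: "toppled (Suc t) = toppled t \<union> block (Suc t)"
  by (auto simp: toppled_def atMost_Suc)

lemma phase_nonsink: "v \<in> phase t \<Longrightarrow> 0 < v \<and> v \<le> n"
  using ferrers by (auto simp: phase_def cols_def ferrers_def split: if_splits intro: gr0I)

lemma phase_independent: "w \<in> phase t \<Longrightarrow> v \<in> phase t \<Longrightarrow> \<not> adj n R w v"
  using adj_row_iff by (auto simp: phase_def cols_def split: if_splits)

lemma block_Suc_subset: "block (Suc t) \<subseteq> phase t"
  by (auto simp: block_Suc)

lemma block_bounded: "block k \<subseteq> {0..n}"
  using phase_nonsink block_Suc_subset by (cases k) (fastforce simp: block_0)+

lemma finite_block: "finite (block k)"
  using block_bounded by (rule finite_subset) simp

lemma finite_toppled: "finite (toppled t)"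
  by (simp add: toppled_def finite_block)

lemma balanced_vertex_stable:
  assumes "0 < v" "v \<le> n"
    and "config t v + deg n R v = c v + card {w \<in> toppled t. adj n R w v}"
  shows "config t v < deg n R v"
  using assms stable[OF assms(1,2)] card_adj_le_deg[of "toppled t" n R v] by linarith

lemma config_balance:
  "0 < v \<Longrightarrow> config t v + (if v \<in> toppled t then deg n R v else 0)
     = c v + card {w \<in> toppled t. adj n R w v}"
proof (induction t arbitrary: v)
  case 0
  have "{w \<in> {0}. adj n R w v} = (if adj n R 0 v then {0} else {})" by auto
  then show ?case using 0 by (simp add: config_0 toppled_0 sink_topple_def)
next
  case (Suc t)
  let ?A = "block (Suc t)"
  have fresh: "?A \<inter> toppled t = {}"
  proof -
    have "deg n R u > config t u" if "u \<in> ?A" "u \<in> toppled t" for u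
      using that Suc.IH[of u] phase_nonsink block_Suc_subset balanced_vertex_stable by fastforce
    then show ?thesis by (auto simp: block_Suc)
  qed
  have "card {w \<in> toppled (Suc t). adj n R w v}
      = card {w \<in> toppled t. adj n R w v} + card {w \<in> ?A. adj n R w v}"
  proof -
    have "{w \<in> toppled (Suc t). adj n R w v}
        = {w \<in> toppled t. adj n R w v} \<union> {w \<in> ?A. adj n R w v}"
      by (auto simp: toppled_Suc)
    then show ?thesis
      by (simp only:) (rule card_Un_disjoint, use fresh finite_toppled finite_block in auto)
  qed
  moreover have "config (Suc t) v = config t v - (if v \<in> ?A then deg n R v else 0)
      + card {w \<in> ?A. adj n R w v}"
    by (simp add: config_Suc topple_set_def)
  moreover have "v \<in> ?A \<Longrightarrow> v \<notin> toppled t \<and> deg n R v \<le> config t v"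
    using fresh by (auto simp: block_Suc)
  ultimately show ?case
    using Suc.IH[OF Suc.prems] by (cases "v \<in> ?A") (auto simp: toppled_Suc)
qed

lemma block_Suc_disjoint: "block (Suc t) \<inter> toppled t = {}"
proof -
  have "config t v < deg n R v" if "v \<in> phase t" "v \<in> toppled t" for v
    using that phase_nonsink[OF that(1)] config_balance[of v t] balanced_vertex_stable by simp
  then show ?thesis by (force simp: block_Suc)
qed

lemma block_Suc_iff:
  "v \<in> block (Suc t) \<longleftrightarrow>
     v \<in> phase t \<and> v \<notin> toppled t \<and> deg n R v \<le> c v + card {w \<in> toppled t. adj n R w v}"
proof (cases "v \<in> phase t \<and> v \<notin> toppled t")
  case True
  then have "config t v = c v + card {w \<in> toppled t. adj n R w v}"
    using config_balance[of v t] phase_nonsink[of v t] by simp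
  then show ?thesis using True by (simp add: block_Suc)
next
  case False
  then show ?thesis using block_Suc_subset block_Suc_disjoint by blast
qed

lemma block_disjoint: "v \<in> block k \<Longrightarrow> s < k \<Longrightarrow> v \<notin> block s"
proof (cases k)
  case (Suc t)
  assume "v \<in> block k" "s < k"
  then have "s \<le> t" using Suc by simp
  with Suc \<open>v \<in> block k\<close> show ?thesis using block_Suc_disjoint[of t] by (auto simp: toppled_def)
qed simp

lemma block_index_eq: "v \<in> block k \<Longrightarrow> block_index n R c v = k"
  unfolding block_index_def block_def[symmetric]
  by (rule Least_equality) (auto dest: block_disjoint simp: not_le[symmetric])

lemma phase_Suc_Suc: "phase (Suc (Suc t)) = phase t"
  by (simp add: phase_def)

lemma block_Suc_empty: "block (Suc t) = {} \<Longrightarrow> block (Suc (Suc t)) = {}"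
proof (rule ccontr)
  assume empty: "block (Suc t) = {}" and "block (Suc (Suc t)) \<noteq> {}"
  then obtain v where "v \<in> block (Suc (Suc t))" by blast
  moreover have "toppled (Suc t) = toppled t" using empty by (simp add: toppled_Suc)
  ultimately have v: "v \<in> phase (Suc t)" "v \<notin> toppled t"
    and unstable: "deg n R v \<le> c v + card {w \<in> toppled t. adj n R w v}"
    using block_Suc_iff[of v "Suc t"] by simp_all
  show False
  proof (cases t)
    case 0
    then have "v \<in> R" "0 \<in> R" using v(1) ferrers by (simp_all add: phase_def ferrers_def)
    then have "\<not> adj n R 0 v" using adj_row_iff by blast
    then have "{w \<in> toppled t. adj n R w v} = {}" using 0 by (auto simp: toppled_0)
    moreover have "c v < deg n R v" using stable phase_nonsink[OF v(1)] by blast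
    ultimately show False using unstable by (simp only: card.empty)
  next
    case (Suc t')
    then have "v \<in> phase t'" using v(1) phase_Suc_Suc by simp
    then have "{w \<in> toppled t. adj n R w v} = {w \<in> toppled t'. adj n R w v}"
      using Suc block_Suc_subset[of t'] phase_independent by (auto simp: toppled_Suc)
    then have "v \<in> block (Suc t')"
      using Suc v unstable \<open>v \<in> phase t'\<close> block_Suc_iff[of v t'] by (simp add: toppled_Suc)
    then show False using Suc v(2) by (simp add: toppled_Suc)
  qed
qed

lemma block_nonempty_below: "block m \<noteq> {} \<Longrightarrow> k \<le> m \<Longrightarrow> block k \<noteq> {}"
proof (cases k)
  case (Suc t)
  assume "k \<le> m"
  have "block m = {}" if "block k = {}"
    using \<open>k \<le> m\<close> that
  proof (induction m rule: dec_induct)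
    case (step m)
    with Suc obtain s where "m = Suc s" by (cases m) auto
    with step show ?case using block_Suc_empty by simp
  qed
  then show "block m \<noteq> {} \<Longrightarrow> block k \<noteq> {}" by blast
qed (simp add: block_0)

lemma toppled_bounded: "toppled t \<subseteq> {0..n}"
  using block_bounded by (auto simp: toppled_def)

lemma card_toppled_ge: "block t \<noteq> {} \<Longrightarrow> Suc t \<le> card (toppled t)"
proof (induction t)
  case (Suc t)
  have "card (toppled (Suc t)) = card (toppled t) + card (block (Suc t))"
    unfolding toppled_Suc
    by (rule card_Un_disjoint) (use finite_toppled finite_block block_Suc_disjoint in auto)
  moreover have "block t \<noteq> {}" using Suc.prems block_nonempty_below by simp
  moreover have "card (block (Suc t)) \<noteq> 0" using Suc.prems finite_block by simp
  ultimately show ?case using Suc.IH by simp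
qed (simp add: toppled_0)

lemma block_Suc_n_empty: "block (Suc n) = {}"
proof (rule ccontr)
  assume "block (Suc n) \<noteq> {}"
  then have "Suc (Suc n) \<le> card (toppled (Suc n))" by (rule card_toppled_ge)
  moreover have "card (toppled (Suc n)) \<le> Suc n"
    using card_mono[OF _ toppled_bounded] by fastforce
  ultimately show False by simp
qed

lemma block_row_iff_even: "v \<in> block k \<Longrightarrow> v \<in> R \<longleftrightarrow> even k"
proof (cases k)
  case 0
  then show "v \<in> block k \<Longrightarrow> v \<in> R \<longleftrightarrow> even k" using ferrers by (simp add: block_0 ferrers_def)
next
  case (Suc t)
  then show "v \<in> block k \<Longrightarrow> v \<in> R \<longleftrightarrow> even k"
    using block_Suc_subset[of t] by (auto simp: phase_def cols_def split: if_splits)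
qed

end

text \<open>The extra assumption is Dhar's burning criterion for recurrence.\<close>

locale recurrent_canonical_toppling = canonical_toppling +
  assumes burning: "\<And>Y. Y \<subseteq> {1..n} \<Longrightarrow> Y \<noteq> {} \<Longrightarrow>
    \<exists>y\<in>Y. deg n R y \<le> c y + card {w \<in> {0..n} - Y. adj n R w y}"
begin

lemma all_toppled: "toppled n = {0..n}"
proof (rule ccontr)
  let ?Y = "{0..n} - toppled n"
  assume "toppled n \<noteq> {0..n}"
  then have "?Y \<noteq> {}" using toppled_bounded by blast
  moreover have "0 \<in> toppled n" using block_0 by (force simp: toppled_def)
  then have "?Y \<subseteq> {1..n}" by (auto simp: Suc_le_eq intro!: gr0I)
  ultimately obtain y where y: "y \<in> ?Y"
    and unstable: "deg n R y \<le> c y + card {w \<in> {0..n} - ?Y. adj n R w y}"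
    using burning by blast
  have "{0..n} - ?Y = toppled n" using toppled_bounded by blast
  moreover have "toppled (Suc n) = toppled n" using block_Suc_n_empty by (simp add: toppled_Suc)
  moreover have "y \<in> phase n \<or> y \<in> phase (Suc n)"
    using y \<open>0 \<in> toppled n\<close> by (auto simp: phase_def cols_def intro!: gr0I)
  ultimately have "y \<in> block (Suc n) \<or> y \<in> block (Suc (Suc n))"
    using y unstable block_Suc_iff by auto
  then show False using block_Suc_n_empty block_Suc_empty by blast
qed

lemma block_iff_rank: "v \<in> block k \<longleftrightarrow> v \<le> n \<and> block_index n R c v = k"
proof
  assume "v \<le> n \<and> block_index n R c v = k"
  moreover then obtain k' where "v \<in> block k'"
    using all_toppled unfolding toppled_def by (metis UN_E atLeastAtMost_iff le0)
  ultimately show "v \<in> block k" using block_index_eq by blast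
qed (use block_bounded block_index_eq in fastforce)

lemma mem_canon_U_iff: "v \<in> canon_U n R c l \<longleftrightarrow> v \<le> n \<and> block_index n R c v = 2 * l"
  by (simp add: canon_U_def block_iff_rank[unfolded block_def])

lemma mem_canon_V_iff:
  "v \<in> canon_V n R c l \<longleftrightarrow> v \<le> n \<and> l \<noteq> 0 \<and> block_index n R c v = 2 * l - 1"
  by (simp add: canon_V_def block_iff_rank[unfolded block_def])

lemma layering_block_index: "layering n R (block_index n R c)"
proof
  show "R \<subseteq> {0..n}" using ferrers by (simp add: ferrers_def)
  show "even (block_index n R c v) \<longleftrightarrow> v \<in> R" if "v \<le> n" for v
    using that block_iff_rank block_row_iff_even by blast
  show "\<exists>w \<le> n. block_index n R c w = i" if "v \<le> n" "i \<le> block_index n R c v" for v i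
  proof -
    have "block i \<noteq> {}"
      using that block_iff_rank block_nonempty_below[of "block_index n R c v" i] by blast
    then show ?thesis using block_iff_rank by blast
  qed
qed

end

section \<open>The orientation of G(F) induced by an EW-tableau\<close>

definition ew_arc :: "nat \<Rightarrow> nat set \<Rightarrow> (nat \<Rightarrow> nat \<Rightarrow> nat) \<Rightarrow> nat \<Rightarrow> nat \<Rightarrow> bool" where
  "ew_arc n R T u v \<longleftrightarrow> (is_cell n R u v \<and> T u v = 1) \<or> (is_cell n R v u \<and> T v u = 0)"

definition sourceless :: "nat \<Rightarrow> nat set \<Rightarrow> (nat \<Rightarrow> nat \<Rightarrow> nat) \<Rightarrow> nat set \<Rightarrow> bool" where
  "sourceless n R T Y \<longleftrightarrow> (\<forall>v\<in>Y. \<exists>u\<in>Y. ew_arc n R T u v)"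

lemma ew_arc_adj: "ew_arc n R T u v \<Longrightarrow> adj n R u v"
  by (auto simp: ew_arc_def adj_def)

lemma ew_arc_asym: "ew_arc n R T u v \<Longrightarrow> \<not> ew_arc n R T v u"
  by (auto simp: ew_arc_def is_cell_def)

lemma phi_TC_eq_card_out_arcs: "phi_TC n R T v = card {w. ew_arc n R T v w}"
proof -
  have "v \<in> R \<Longrightarrow> {w. ew_arc n R T v w} = {j. is_cell n R v j \<and> T v j = 1}"
    and "v \<notin> R \<Longrightarrow> {w. ew_arc n R T v w} = {i. is_cell n R i v \<and> T i v = 0}"
    by (auto simp: ew_arc_def is_cell_def cols_def)
  moreover have "v \<notin> R \<Longrightarrow> v \<notin> cols n R \<Longrightarrow> card {w. ew_arc n R T v w} = 0"
    by (simp add: ew_arc_def is_cell_def)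
  ultimately show ?thesis by (simp add: phi_TC_def)
qed

locale ew_tableau =
  fixes n :: nat and R :: "nat set" and T :: "nat \<Rightarrow> nat \<Rightarrow> nat"
  assumes ferrers: "ferrers n R" and ew: "T \<in> EWtab n R"
begin

lemma cell_01: "is_cell n R i j \<Longrightarrow> T i j = 0 \<or> T i j = 1"
  using ew by (auto simp: EWtab_def)

lemma no_rectangle:
  assumes "is_cell n R i j" "is_cell n R i j'" "is_cell n R i' j" "is_cell n R i' j'"
    and "T i j = 0" "T i' j' = 0" "T i j' = 1" "T i' j = 1"
  shows False
proof -
  have "i \<noteq> i'" "j \<noteq> j'" using assms(5-8) by auto
  then show False using ew assms unfolding EWtab_def by blast
qed

lemma adj_imp_ew_arc: "adj n R u v \<Longrightarrow> ew_arc n R T u v \<or> ew_arc n R T v u"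
  using cell_01[of u v] cell_01[of v u] by (auto simp: adj_def ew_arc_def)

lemma ew_arc_into_nonsink:
  assumes "0 < v" "v \<le> n"
  obtains u where "ew_arc n R T u v"
proof (cases "v \<in> R")
  case True
  then have "v \<in> R - {0}" using assms(1) by simp
  then obtain j where "is_cell n R v j" "T v j = 0"
    using ew unfolding EWtab_def by blast
  then show thesis using that by (auto simp: ew_arc_def)
next
  case False
  then have "is_cell n R 0 v" "T 0 v = 1"
    using ferrers ew assms by (auto simp: is_cell_def cols_def ferrers_def EWtab_def)
  then show thesis using that by (auto simp: ew_arc_def)
qed

lemma phi_TC_stable:
  assumes "0 < v" "v \<le> n"
  shows "phi_TC n R T v < deg n R v"
proof -
  obtain u where u: "ew_arc n R T u v" using ew_arc_into_nonsink[OF assms] .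
  have "{w. ew_arc n R T v w} \<subset> {w. adj n R w v}"
    using u ew_arc_adj ew_arc_asym adj_sym by blast
  then show ?thesis
    unfolding phi_TC_eq_card_out_arcs deg_eq_card_adj by (rule psubset_card_mono[OF finite_adj])
qed

text \<open>This is the forbidden rectangle pattern of EW-tableaux, read in terms of arcs.\<close>

lemma in_arc_transfer:
  assumes "i \<in> R" "i' \<in> R" "i < i'"
    and "ew_arc n R T i' b" "ew_arc n R T b i" "ew_arc n R T u i'"
  shows "ew_arc n R T u i"
proof -
  have cells: "is_cell n R i b" "T i b = 0" "is_cell n R i' b" "T i' b = 1"
    "is_cell n R i' u" "T i' u = 0"
    using assms by (auto simp: ew_arc_def is_cell_def cols_def)
  then have "is_cell n R i u" using assms(1,3) by (auto simp: is_cell_def)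
  moreover have "T i u \<noteq> 1"
    using no_rectangle[of i b u i'] cells \<open>is_cell n R i u\<close> by blast
  ultimately have "T i u = 0" using cell_01 by blast
  with \<open>is_cell n R i u\<close> show ?thesis by (simp add: ew_arc_def)
qed

lemma sourceless_shrink:
  assumes Y: "Y \<subseteq> {1..n}" "Y \<noteq> {}" "sourceless n R T Y"
  obtains Z where "Z \<subset> Y" "Z \<noteq> {}" "sourceless n R T Z"
proof -
  have in_arc: "\<exists>u\<in>Y. ew_arc n R T u v" if "v \<in> Y" for v
    using Y(3) that by (simp add: sourceless_def)
  have "Y \<inter> R \<noteq> {}"
  proof
    assume no_row: "Y \<inter> R = {}"
    obtain v where "v \<in> Y" using Y(2) by blast
    then obtain u where "u \<in> Y" "ew_arc n R T u v" using in_arc by blast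
    then show False using \<open>v \<in> Y\<close> no_row adj_row_iff ew_arc_adj by blast
  qed
  moreover have "finite (Y \<inter> R)" using Y(1) finite_subset by blast
  moreover define i where "i = Min (Y \<inter> R)"
  ultimately have i: "i \<in> Y" "i \<in> R" and i_min: "\<And>i'. i' \<in> Y \<Longrightarrow> i' \<in> R \<Longrightarrow> i \<le> i'"
    using Min_in by auto
  define B where "B = {b \<in> Y. ew_arc n R T b i}"
  define Z where "Z = B \<union> {i' \<in> Y - {i}. \<exists>b\<in>B. ew_arc n R T i' b}"
  show thesis
  proof (rule that)
    have "i \<notin> B" using ew_arc_asym[of n R T i i] by (auto simp: B_def)
    then show "Z \<subset> Y" using i by (auto simp: Z_def B_def)
    show "Z \<noteq> {}" using in_arc[OF i(1)] by (auto simp: Z_def B_def)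
    show "sourceless n R T Z"
      unfolding sourceless_def
    proof
      fix v assume "v \<in> Z"
      then consider "v \<in> B" | b where "v \<in> Y" "v \<noteq> i" "b \<in> B" "ew_arc n R T v b"
        by (auto simp: Z_def)
      then show "\<exists>u\<in>Z. ew_arc n R T u v"
      proof cases
        case 1
        then obtain u where u: "u \<in> Y" "ew_arc n R T u v" using in_arc by (auto simp: B_def)
        moreover have "u \<noteq> i" using 1 u(2) ew_arc_asym by (auto simp: B_def)
        ultimately show ?thesis using 1 by (auto simp: Z_def)
      next
        case 2
        obtain u where "u \<in> Y" "ew_arc n R T u v" using in_arc[OF 2(1)] by blast
        moreover have "b \<notin> R" using 2(3) i(2) adj_row_iff[OF ew_arc_adj] by (auto simp: B_def)
        then have "v \<in> R" using 2(4) adj_row_iff[OF ew_arc_adj] by blast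
        then have "i < v" using 2 i_min le_neq_implies_less by blast
        ultimately have "u \<in> B"
          using in_arc_transfer[of i v b u] 2 i(2) \<open>v \<in> R\<close> by (auto simp: B_def)
        then show ?thesis using \<open>ew_arc n R T u v\<close> by (auto simp: Z_def)
      qed
    qed
  qed
qed

lemma sourceless_empty: "Y \<subseteq> {1..n} \<Longrightarrow> sourceless n R T Y \<Longrightarrow> Y = {}"
proof (induction "card Y" arbitrary: Y rule: less_induct)
  case less
  show ?case
  proof (rule ccontr)
    assume "Y \<noteq> {}"
    then obtain Z where Z: "Z \<subset> Y" "Z \<noteq> {}" "sourceless n R T Z"
      using sourceless_shrink less.prems by blast
    have "card Z < card Y"
      using Z(1) less.prems(1) by (meson finite_atLeastAtMost finite_subset psubset_card_mono)
    then show False using less.hyps Z less.prems(1) by blast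
  qed
qed

lemma phi_TC_burning:
  assumes "Y \<subseteq> {1..n}" "Y \<noteq> {}"
  shows "\<exists>y\<in>Y. deg n R y \<le> phi_TC n R T y + card {w \<in> {0..n} - Y. adj n R w y}"
proof -
  have "\<not> sourceless n R T Y" using sourceless_empty assms by blast
  then obtain y where y: "y \<in> Y" "\<forall>u\<in>Y. \<not> ew_arc n R T u y"
    unfolding sourceless_def by blast
  let ?out = "{w. ew_arc n R T y w}" and ?rest = "{w \<in> {0..n} - Y. adj n R w y}"
  have "?out \<subseteq> {w. adj n R w y}" using ew_arc_adj adj_sym by blast
  then have "finite ?out" using finite_adj finite_subset by blast
  have "w \<in> ?out \<union> ?rest" if "adj n R w y" for w
  proof (cases "w \<in> Y")
    case True
    then show ?thesis using y(2) that adj_imp_ew_arc[of y w] adj_sym by blast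
  next
    case False
    then show ?thesis using that adj_bounded by auto
  qed
  then have "{w. adj n R w y} \<subseteq> ?out \<union> ?rest" by blast
  then have "deg n R y \<le> card (?out \<union> ?rest)"
    unfolding deg_eq_card_adj by (rule card_mono[rotated]) (simp add: \<open>finite ?out\<close>)
  also have "\<dots> \<le> card ?out + card ?rest" by (rule card_Un_le)
  finally show ?thesis using y(1) unfolding phi_TC_eq_card_out_arcs by blast
qed

end

sublocale ew_tableau \<subseteq> recurrent_canonical_toppling n R "phi_TC n R T"
proof
  show "ferrers n R" by (rule ferrers)
  show "phi_TC n R T v < deg n R v" if "0 < v" "v \<le> n" for v using that by (rule phi_TC_stable)
  show "\<exists>y\<in>Y. deg n R y \<le> phi_TC n R T y + card {w \<in> {0..n} - Y. adj n R w y}"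
    if "Y \<subseteq> {1..n}" "Y \<noteq> {}" for Y using that by (rule phi_TC_burning)
qed

theorem lemma4p9:
  fixes n :: nat and R :: "nat set" and T :: "nat \<Rightarrow> nat \<Rightarrow> nat"
  assumes "ferrers n R"
    and "T \<in> EWtab n R"
  shows "(\<forall>l j k. j \<in> canon_U n R (phi_TC n R T) l \<and> k \<in> cols n R \<and> j < k \<longrightarrow>
            (k \<in> canon_V n R (phi_TC n R T) l \<longleftrightarrow>
               suppl n R T j k = 0 \<and> \<not> cornersupport n R (suppl n R T) j k))
       \<and> (\<forall>l j k. j \<in> canon_V n R (phi_TC n R T) l \<and> k \<in> R \<and> k < j \<longrightarrow>
            (k \<in> canon_U n R (phi_TC n R T) (l - 1) \<longleftrightarrow>
               suppl n R T k j = 1 \<and> \<not> cornersupport n R (suppl n R T) k j))"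
proof -
  interpret ew_tableau n R T using assms by (rule ew_tableau.intro)
  interpret layering n R "block_index n R (phi_TC n R T)" by (rule layering_block_index)
  have col_bounded: "k \<in> cols n R \<Longrightarrow> k \<le> n" for k by (simp add: cols_def)
  show ?thesis
  proof (intro conjI allI impI; elim conjE)
    fix l j k assume "j \<in> canon_U n R (phi_TC n R T) l" "k \<in> cols n R"
    moreover then have "j \<in> R" using mem_canon_U_iff[of j l] even_rank_iff_row[of j] by auto
    ultimately show "k \<in> canon_V n R (phi_TC n R T) l \<longleftrightarrow>
        suppl n R T j k = 0 \<and> \<not> cornersupport n R (suppl n R T) j k"
      unfolding suppl_eq_rank_tableau mem_canon_U_iff mem_canon_V_iff
        rank_tableau_0_not_cornersupport_iff[OF \<open>j \<in> R\<close> \<open>k \<in> cols n R\<close>]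
      using col_bounded by auto
  next
    fix l j k assume "j \<in> canon_V n R (phi_TC n R T) l" "k \<in> R"
    moreover then have "j \<in> cols n R"
      using mem_canon_V_iff[of j l] even_rank_iff_row[of j] by (auto simp: cols_def)
    ultimately show "k \<in> canon_U n R (phi_TC n R T) (l - 1) \<longleftrightarrow>
        suppl n R T k j = 1 \<and> \<not> cornersupport n R (suppl n R T) k j"
      unfolding suppl_eq_rank_tableau mem_canon_U_iff mem_canon_V_iff
        rank_tableau_1_not_cornersupport_iff[OF \<open>k \<in> R\<close> \<open>j \<in> cols n R\<close>]
      using rows_subset by auto
  qed
qed

end
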